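(* Let $A(\mathbb D)$ be the Banach space of continuous functions on $\overline{\mathbb D}$ holomorphic on $\mathbb D$, with the supremum norm. Then the set Möb, viewed as a subset of $A(\mathbb D)$, is total in $A(\mathbb D)$ (its linear span is dense).
   Context: Möb is the group of biholomorphic automorphisms of the open unit disc $\mathbb D$, i.e. the maps $z\mapsto\beta\frac{z-\alpha}{1-\bar\alpha z}$ with $\alpha\in\mathbb D$, $\beta\in\mathbb T$; each extends continuously to $\overline{\mathbb D}$. *)

theory Defs
  imports "HOL-Complex_Analysis.Complex_Analysis"
begin

definition disc_algebra :: "(complex \<Rightarrow> complex) set" where
  "disc_algebra = {f. continuous_on (cball 0 1) f \<and> f holomorphic_on ball 0 1}"

definition moeb :: "complex \<Rightarrow> complex \<Rightarrow> complex \<Rightarrow> complex" where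
  "moeb \<alpha> \<beta> z = \<beta> * (z - \<alpha>) / (1 - cnj \<alpha> * z)"

definition Moeb :: "(complex \<Rightarrow> complex) set" where
  "Moeb = {moeb \<alpha> \<beta> | \<alpha> \<beta>. \<alpha> \<in> ball 0 1 \<and> cmod \<beta> = 1}"

end

theory Submission
  imports Defs
begin

text \<open>
  Let A be the set of functions that are uniform limits on the closed disc of linear
  combinations of Moebius maps; A is a linear space closed under uniform limits, also along
  continuous one-parameter families. The difference quotients (z - moeb alpha 1 z) / alpha
  tend to 1 - z^2 and to 1 + z^2 as alpha tends to 0 along the real and the imaginary axis,
  so the constant 1 lies in A, and then so does every kernel 1 / (1 - b z) with |b| < 1, a
  combination of 1 and moeb (cnj b) 1. Since
  z^n / (1 - t z) = (1 / (1 - t z) - sum_{j<n} t^j z^j) / t^n,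
  letting t -> 0 puts every monomial, hence every polynomial, in A. Finally a function of
  the disc algebra is uniformly close to its dilation f (r z) for r near 1, and the dilation is
  the uniform limit on the closed disc of its Taylor polynomials.
\<close>

definition lincomb_of :: "('a \<Rightarrow> 'b::real_normed_field) set \<Rightarrow> ('a \<Rightarrow> 'b) \<Rightarrow> bool" where
  "lincomb_of B g \<longleftrightarrow> (\<exists>(n::nat) c \<phi>. (\<forall>i<n. \<phi> i \<in> B) \<and> g = (\<lambda>z. \<Sum>i<n. c i * \<phi> i z))"

definition approximable_on :: "'a set \<Rightarrow> ('a \<Rightarrow> 'b::real_normed_field) set \<Rightarrow> ('a \<Rightarrow> 'b) \<Rightarrow> bool" where
  "approximable_on K B g \<longleftrightarrow> (\<forall>e>0. \<exists>h. lincomb_of B h \<and> (\<forall>z\<in>K. norm (g z - h z) \<le> e))"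

lemma lincomb_of_zero: "lincomb_of B (\<lambda>z. 0)"
  unfolding lincomb_of_def by (rule exI[of _ 0]) simp

lemma lincomb_of_basis: "\<phi> \<in> B \<Longrightarrow> lincomb_of B \<phi>"
  unfolding lincomb_of_def by (intro exI[of _ 1] exI[of _ "\<lambda>_. 1"] exI[of _ "\<lambda>_. \<phi>"]) simp

lemma lincomb_of_scale:
  assumes "lincomb_of B g" shows "lincomb_of B (\<lambda>z. a * g z)"
proof -
  obtain n :: nat and c \<phi> where "\<forall>i<n. \<phi> i \<in> B" "g = (\<lambda>z. \<Sum>i<n. c i * \<phi> i z)"
    using assms unfolding lincomb_of_def by blast
  then show ?thesis unfolding lincomb_of_def
    by (intro exI[of _ n] exI[of _ "\<lambda>i. a * c i"] exI[of _ \<phi>]) (simp add: sum_distrib_left mult.assoc)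
qed

lemma lincomb_of_add:
  assumes "lincomb_of B g" "lincomb_of B h" shows "lincomb_of B (\<lambda>z. g z + h z)"
proof -
  obtain m :: nat and c \<phi> where g: "\<forall>i<m. \<phi> i \<in> B" "g = (\<lambda>z. \<Sum>i<m. c i * \<phi> i z)"
    using assms(1) unfolding lincomb_of_def by blast
  obtain n :: nat and d \<psi> where h: "\<forall>i<n. \<psi> i \<in> B" "h = (\<lambda>z. \<Sum>i<n. d i * \<psi> i z)"
    using assms(2) unfolding lincomb_of_def by blast
  define c' where "c' i = (if i < m then c i else d (i - m))" for i
  define \<phi>' where "\<phi>' i = (if i < m then \<phi> i else \<psi> (i - m))" for i
  have split: "(\<Sum>i<m + k. F i) = (\<Sum>i<m. F i) + (\<Sum>i<k. F (m + i))" for F :: "nat \<Rightarrow> 'b" and k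
    by (induction k) (simp_all add: add_ac)
  have "(\<lambda>z. g z + h z) = (\<lambda>z. \<Sum>i<m + n. c' i * \<phi>' i z)"
    unfolding split g h c'_def \<phi>'_def by simp
  moreover have "\<forall>i<m + n. \<phi>' i \<in> B"
    using g h by (simp add: \<phi>'_def)
  ultimately show ?thesis unfolding lincomb_of_def by blast
qed

lemma approximable_on_lincomb: "lincomb_of B g \<Longrightarrow> approximable_on K B g"
  unfolding approximable_on_def by (intro allI impI exI[of _ g]) simp

lemma approximable_on_cong:
  "approximable_on K B g \<Longrightarrow> (\<And>z. z \<in> K \<Longrightarrow> g z = g' z) \<Longrightarrow> approximable_on K B g'"
  unfolding approximable_on_def by metis

lemma approximable_on_uniform_limit:
  assumes "\<And>e. e > 0 \<Longrightarrow> \<exists>g. approximable_on K B g \<and> (\<forall>z\<in>K. norm (f z - g z) \<le> e)"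
  shows "approximable_on K B f"
  unfolding approximable_on_def
proof (intro allI impI)
  fix e :: real assume "e > 0"
  then obtain g where g: "approximable_on K B g" "\<forall>z\<in>K. norm (f z - g z) \<le> e / 2"
    using assms[of "e / 2"] by auto
  then obtain h where h: "lincomb_of B h" "\<forall>z\<in>K. norm (g z - h z) \<le> e / 2"
    using \<open>e > 0\<close> unfolding approximable_on_def by (meson half_gt_zero)
  have "norm (f z - h z) \<le> e" if "z \<in> K" for z
    using norm_diff_triangle_le[of "f z" "g z" "e / 2" "h z" "e / 2"] g(2) h(2) that by simp
  with h(1) show "\<exists>h. lincomb_of B h \<and> (\<forall>z\<in>K. norm (f z - h z) \<le> e)"
    by blast
qed

lemma approximable_on_add:
  assumes "approximable_on K B f" "approximable_on K B g"
  shows "approximable_on K B (\<lambda>z. f z + g z)"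
  unfolding approximable_on_def
proof (intro allI impI)
  fix e :: real assume "e > 0"
  then obtain h1 h2 where h: "lincomb_of B h1" "\<forall>z\<in>K. norm (f z - h1 z) \<le> e / 2"
      "lincomb_of B h2" "\<forall>z\<in>K. norm (g z - h2 z) \<le> e / 2"
    using assms unfolding approximable_on_def by (meson half_gt_zero)
  have "norm (f z + g z - (h1 z + h2 z)) \<le> e" if "z \<in> K" for z
    using norm_diff_triangle_ineq[of "f z" "g z" "h1 z" "h2 z"] h(2,4) that by fastforce
  with lincomb_of_add[OF h(1,3)]
  show "\<exists>h. lincomb_of B h \<and> (\<forall>z\<in>K. norm (f z + g z - h z) \<le> e)"
    by blast
qed

lemma approximable_on_scale:
  assumes "approximable_on K B f" shows "approximable_on K B (\<lambda>z. a * f z)"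
  unfolding approximable_on_def
proof (intro allI impI)
  fix e :: real assume "e > 0"
  have "norm a + 1 > 0"
    by (simp add: add_nonneg_pos)
  with \<open>e > 0\<close> have "e / (norm a + 1) > 0"
    by simp
  then obtain h where h: "lincomb_of B h" "\<forall>z\<in>K. norm (f z - h z) \<le> e / (norm a + 1)"
    using assms unfolding approximable_on_def by blast
  have "norm (a * f z - a * h z) \<le> e" if "z \<in> K" for z
  proof -
    have "norm (a * f z - a * h z) = norm a * norm (f z - h z)"
      by (simp add: norm_mult flip: right_diff_distrib)
    also have "\<dots> \<le> (norm a + 1) * (e / (norm a + 1))"
      using h(2) that by (intro mult_mono) auto
    finally show ?thesis
      using \<open>norm a + 1 > 0\<close> by simp
  qed
  with lincomb_of_scale[OF h(1)]
  show "\<exists>h. lincomb_of B h \<and> (\<forall>z\<in>K. norm (a * f z - h z) \<le> e)"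
    by blast
qed

lemma approximable_on_diff:
  assumes "approximable_on K B f" "approximable_on K B g"
  shows "approximable_on K B (\<lambda>z. f z - g z)"
  using approximable_on_add[OF assms(1) approximable_on_scale[OF assms(2), of "-1"]] by simp

lemma approximable_on_sum:
  "(\<And>i. i \<in> I \<Longrightarrow> approximable_on K B (f i)) \<Longrightarrow> approximable_on K B (\<lambda>z. \<Sum>i\<in>I. f i z)"
proof (induction I rule: infinite_finite_induct)
  case (insert i I)
  then show ?case using approximable_on_add[of K B "f i" "\<lambda>z. \<Sum>i\<in>I. f i z"] by simp
qed (simp_all add: approximable_on_lincomb lincomb_of_zero)

lemma approximable_on_parametric_limit:
  fixes F :: "real \<Rightarrow> 'a::topological_space \<Rightarrow> 'b::real_normed_field"
  assumes cont: "continuous_on ({0..d} \<times> K) (\<lambda>(t, z). F t z)" and "compact K" "d > 0"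
    and approx: "\<And>t. 0 < t \<Longrightarrow> t \<le> d \<Longrightarrow> approximable_on K B (F t)"
  shows "approximable_on K B (F 0)"
proof (rule approximable_on_uniform_limit)
  fix e :: real assume "e > 0"
  obtain X where X: "0 \<in> X" "open X" "\<forall>t\<in>X \<inter> {0..d}. \<forall>z\<in>K. dist (F t z) (F 0 z) \<le> e"
    using continuous_on_prod_compactE[OF cont \<open>compact K\<close> _ \<open>e > 0\<close>, of 0] \<open>d > 0\<close> by auto
  obtain r where "r > 0" "ball 0 r \<subseteq> X"
    using X(1,2) open_contains_ball by blast
  define t where "t = min d (r / 2)"
  have t: "0 < t" "t \<le> d" "t \<in> X"
    using \<open>r > 0\<close> \<open>d > 0\<close> \<open>ball 0 r \<subseteq> X\<close> by (auto simp: t_def)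
  then have "\<forall>z\<in>K. norm (F 0 z - F t z) \<le> e"
    using X(3) by (metis IntI atLeastAtMost_iff dist_commute dist_norm less_imp_le)
  with approx[OF t(1,2)] show "\<exists>g. approximable_on K B g \<and> (\<forall>z\<in>K. norm (F 0 z - g z) \<le> e)"
    by blast
qed

lemma one_minus_mult_neq_0: "cmod z \<le> 1 \<Longrightarrow> cmod b < 1 \<Longrightarrow> 1 - b * z \<noteq> 0"
  by (metis eq_iff_diff_eq_0 mult.commute mult_left_le_one_le norm_ge_zero norm_mult norm_one not_le)

lemma approximable_moeb: "cmod \<alpha> < 1 \<Longrightarrow> approximable_on (cball 0 1) Moeb (moeb \<alpha> 1)"
  by (intro approximable_on_lincomb lincomb_of_basis) (force simp: Moeb_def)

lemma approximable_id: "approximable_on (cball 0 1) Moeb (\<lambda>z. z)"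
proof -
  have "moeb 0 1 = (\<lambda>z. z)"
    by (simp add: moeb_def fun_eq_iff)
  then show ?thesis
    using approximable_moeb[of 0] by simp
qed

lemma moeb_difference_quotient:
  assumes "\<alpha> \<noteq> 0" "1 - cnj \<alpha> * z \<noteq> 0"
  shows "(1 / \<alpha>) * (z - moeb \<alpha> 1 z) = (1 - cnj \<alpha> / \<alpha> * z\<^sup>2) / (1 - cnj \<alpha> * z)"
  using assms by (simp add: moeb_def field_simps power2_eq_square)

lemma approximable_one: "approximable_on (cball 0 1) Moeb (\<lambda>z. 1)"
proof -
  define F where "F t z = ((1 - z\<^sup>2) / (1 - of_real t * z) + (1 + z\<^sup>2) / (1 + \<i> * of_real t * z)) / 2"
    for t :: real and z
  have "approximable_on (cball 0 1) Moeb (F 0)"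
  proof (rule approximable_on_parametric_limit[where d = "1/2"])
    have "1 - of_real t * z \<noteq> 0" "1 + \<i> * of_real t * z \<noteq> 0"
      if "t \<in> {0..1/2}" "z \<in> cball 0 1" for t z
      using one_minus_mult_neq_0[of z "of_real t"] one_minus_mult_neq_0[of z "- \<i> * of_real t"] that
      by (auto simp: norm_mult)
    then show "continuous_on ({0..1/2} \<times> cball 0 1) (\<lambda>(t, z). F t z)"
      unfolding F_def case_prod_beta by (intro continuous_intros) auto
  next
    fix t :: real assume t: "0 < t" "t \<le> 1/2"
    let ?a = "complex_of_real t" and ?b = "\<i> * complex_of_real t"
    have "approximable_on (cball 0 1) Moeb
            (\<lambda>z. (1 / 2) * ((1 / ?a) * (z - moeb ?a 1 z) + (1 / ?b) * (z - moeb ?b 1 z)))"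
      using t by (intro approximable_on_add approximable_on_scale approximable_on_diff
          approximable_id approximable_moeb) (auto simp: norm_mult)
    then show "approximable_on (cball 0 1) Moeb (F t)"
    proof (rule approximable_on_cong)
      fix z :: complex assume "z \<in> cball 0 1"
      then have "1 - cnj ?a * z \<noteq> 0" "1 - cnj ?b * z \<noteq> 0"
        using t one_minus_mult_neq_0[of z "cnj ?a"] one_minus_mult_neq_0[of z "cnj ?b"]
        by (auto simp: norm_mult)
      then have "(1 / ?a) * (z - moeb ?a 1 z) = (1 - z\<^sup>2) / (1 - ?a * z)"
        and "(1 / ?b) * (z - moeb ?b 1 z) = (1 + z\<^sup>2) / (1 + ?b * z)"
        using t moeb_difference_quotient[of ?a z] moeb_difference_quotient[of ?b z] by simp_all
      then show "(1 / 2) * ((1 / ?a) * (z - moeb ?a 1 z) + (1 / ?b) * (z - moeb ?b 1 z)) = F t z"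
        by (simp add: F_def mult.assoc)
    qed
  qed auto
  then show ?thesis
    by (rule approximable_on_cong) (simp add: F_def)
qed

lemma moeb_kernel_identity:
  "1 - b * z \<noteq> 0 \<Longrightarrow> b * moeb (cnj b) 1 z + 1 = (1 - b * cnj b) / (1 - b * z)"
  by (simp add: moeb_def field_simps)

lemma approximable_kernel:
  assumes "cmod b < 1" shows "approximable_on (cball 0 1) Moeb (\<lambda>z. 1 / (1 - b * z))"
proof -
  have "1 - b * cnj b \<noteq> 0"
    using one_minus_mult_neq_0[of "cnj b" b] assms by simp
  have "approximable_on (cball 0 1) Moeb (\<lambda>z. (1 / (1 - b * cnj b)) * (b * moeb (cnj b) 1 z + 1))"
    using assms by (intro approximable_on_scale approximable_on_add approximable_one
        approximable_on_scale[where a = b] approximable_moeb) simp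
  then show ?thesis
  proof (rule approximable_on_cong)
    fix z :: complex assume "z \<in> cball 0 1"
    then have "1 - b * z \<noteq> 0"
      using one_minus_mult_neq_0 assms by simp
    with \<open>1 - b * cnj b \<noteq> 0\<close>
    show "(1 / (1 - b * cnj b)) * (b * moeb (cnj b) 1 z + 1) = 1 / (1 - b * z)"
      by (simp add: moeb_kernel_identity)
  qed
qed

lemma geometric_tail:
  fixes w :: "'a::field"
  assumes "w \<noteq> 1" shows "1 / (1 - w) - (\<Sum>j<n. w ^ j) = w ^ n / (1 - w)"
  using assms by (simp add: sum_gp_strict field_simps)

lemma approximable_power: "approximable_on (cball 0 1) Moeb (\<lambda>z. z ^ n)"
proof (induction n rule: less_induct)
  case (less n)
  define F where "F t z = z ^ n / (1 - of_real t * z)" for t :: real and z :: complex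
  have "approximable_on (cball 0 1) Moeb (F 0)"
  proof (rule approximable_on_parametric_limit[where d = "1/2"])
    have "1 - of_real t * z \<noteq> 0" if "t \<in> {0..1/2}" "z \<in> cball 0 1" for t :: real and z :: complex
      using one_minus_mult_neq_0[of z "of_real t"] that by auto
    then show "continuous_on ({0..1/2} \<times> cball 0 1) (\<lambda>(t, z). F t z)"
      unfolding F_def case_prod_beta by (intro continuous_intros) auto
  next
    fix t :: real assume t: "0 < t" "t \<le> 1/2"
    have "approximable_on (cball 0 1) Moeb
            (\<lambda>z. (1 / of_real t ^ n) * (1 / (1 - of_real t * z) - (\<Sum>j<n. of_real t ^ j * z ^ j)))"
      using t less.IH by (intro approximable_on_scale approximable_on_diff approximable_on_sum
          approximable_kernel) auto
    then show "approximable_on (cball 0 1) Moeb (F t)"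
    proof (rule approximable_on_cong)
      fix z :: complex assume "z \<in> cball 0 1"
      then have "of_real t * z \<noteq> 1"
        using one_minus_mult_neq_0[of z "of_real t"] t by auto
      then show "(1 / of_real t ^ n) * (1 / (1 - of_real t * z) - (\<Sum>j<n. of_real t ^ j * z ^ j)) = F t z"
        using t geometric_tail[of "of_real t * z" n] by (simp add: F_def power_mult_distrib)
    qed
  qed auto
  then show ?case
    by (rule approximable_on_cong) (simp add: F_def)
qed

lemma approximable_polynomial: "approximable_on (cball 0 1) Moeb (\<lambda>z. \<Sum>k<N. c k * z ^ k)"
  by (intro approximable_on_sum approximable_on_scale approximable_power)

lemma holomorphic_Taylor_polynomials_uniform:
  fixes f :: "complex \<Rightarrow> complex"
  assumes "f holomorphic_on ball 0 1" "r < 1" "e > 0"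
  obtains N where
    "\<forall>w\<in>cball 0 r. cmod (f w - (\<Sum>k<N. fps_nth (fps_expansion f 0) k * w ^ k)) < e"
proof -
  let ?a = "fps_nth (fps_expansion f 0)"
  have "ereal r < ereal 1"
    using assms(2) by simp
  moreover have "ereal 1 \<le> conv_radius ?a"
    using conv_radius_fps_expansion[of f 0 "ereal 1"] assms(1) by (simp add: fps_conv_radius_def)
  ultimately have "ereal r < conv_radius ?a"
    by (fact less_le_trans)
  from powser_uniform_limit[OF this, of 0]
  obtain N where N: "\<forall>w\<in>cball 0 r. dist (\<Sum>k<N. ?a k * w ^ k) (\<Sum>k. ?a k * w ^ k) < e"
    using assms(3) unfolding uniform_limit_sequentially_iff by fastforce
  have "(\<Sum>k. ?a k * w ^ k) = f w" if "w \<in> cball 0 r" for w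
    using eval_fps_expansion'[of f 0 "ereal 1" w] assms that by (simp add: eval_fps_def)
  with N show ?thesis
    by (intro that[of N]) (simp add: dist_norm norm_minus_commute)
qed

lemma dilation_uniformly_close:
  fixes f :: "complex \<Rightarrow> complex"
  assumes "continuous_on (cball 0 1) f" "e > 0"
  obtains r where "0 \<le> r" "r < 1" "\<forall>z\<in>cball 0 1. cmod (f (of_real r * z) - f z) < e"
proof -
  obtain d where "d > 0" and d: "\<forall>x\<in>cball 0 1. \<forall>y\<in>cball 0 1. dist y x < d \<longrightarrow> dist (f y) (f x) < e"
    using compact_uniformly_continuous[OF assms(1) compact_cball] assms(2)
    unfolding uniformly_continuous_on_def by metis
  define r where "r = max 0 (1 - d / 2)"
  have r: "0 \<le> r" "r < 1" "1 - r < d"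
    using \<open>d > 0\<close> by (auto simp: r_def)
  have "cmod (f (of_real r * z) - f z) < e" if "z \<in> cball 0 1" for z
  proof -
    have "of_real r * z \<in> cball 0 1"
      using r that by (simp add: norm_mult mult_le_one)
    have "dist (of_real r * z) z = cmod (of_real (r - 1) * z)"
      by (simp add: dist_norm algebra_simps)
    also have "\<dots> = (1 - r) * cmod z"
      using r by (simp only: norm_mult norm_of_real) simp
    also have "\<dots> \<le> 1 - r"
      using r that by (simp add: mult_left_le)
    finally have "dist (of_real r * z) z < d"
      using r(3) by linarith
    then show ?thesis
      using d \<open>of_real r * z \<in> cball 0 1\<close> that by (simp add: dist_norm)
  qed
  with r show ?thesis
    using that by blast
qed

lemma approximable_disc_algebra:
  assumes "f \<in> disc_algebra" shows "approximable_on (cball 0 1) Moeb f"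
proof (rule approximable_on_uniform_limit)
  fix e :: real assume "e > 0"
  have "continuous_on (cball 0 1) f" "f holomorphic_on ball 0 1"
    using assms by (auto simp: disc_algebra_def)
  obtain r where r: "0 \<le> r" "r < 1" "\<forall>z\<in>cball 0 1. cmod (f (of_real r * z) - f z) < e / 2"
    using dilation_uniformly_close \<open>continuous_on (cball 0 1) f\<close> \<open>e > 0\<close> half_gt_zero by blast
  let ?a = "fps_nth (fps_expansion f 0)"
  obtain N where N: "\<forall>w\<in>cball 0 r. cmod (f w - (\<Sum>k<N. ?a k * w ^ k)) < e / 2"
    using holomorphic_Taylor_polynomials_uniform \<open>f holomorphic_on ball 0 1\<close> r(2) \<open>e > 0\<close>
      half_gt_zero by blast
  define p where "p z = (\<Sum>k<N. (?a k * of_real r ^ k) * z ^ k)" for z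
  have "cmod (f z - p z) \<le> e" if "z \<in> cball 0 1" for z
  proof -
    have "of_real r * z \<in> cball 0 r"
      using r that by (simp add: norm_mult mult_left_le)
    then have "cmod (f (of_real r * z) - (\<Sum>k<N. ?a k * (of_real r * z) ^ k)) < e / 2"
      using N by blast
    then have "cmod (f (of_real r * z) - p z) < e / 2"
      by (simp add: p_def power_mult_distrib mult.assoc)
    moreover have "cmod (f z - f (of_real r * z)) < e / 2"
      using r(3) that by (metis norm_minus_commute)
    ultimately show ?thesis
      using norm_diff_triangle_less[of "f z" "f (of_real r * z)" "e / 2" "p z" "e / 2"] by simp
  qed
  moreover have "approximable_on (cball 0 1) Moeb p"
    unfolding p_def by (rule approximable_polynomial)
  ultimately show "\<exists>g. approximable_on (cball 0 1) Moeb g \<and> (\<forall>z\<in>cball 0 1. cmod (f z - g z) \<le> e)"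
    by blast
qed

theorem lemma4p6:
  fixes f :: "complex \<Rightarrow> complex" and \<epsilon> :: real
  assumes "f \<in> disc_algebra" and "\<epsilon> > 0"
  shows "\<exists>(n::nat) (c :: nat \<Rightarrow> complex) (\<phi> :: nat \<Rightarrow> complex \<Rightarrow> complex).
           (\<forall>i<n. \<phi> i \<in> Moeb) \<and>
           (\<forall>z\<in>cball 0 1. cmod (f z - (\<Sum>i<n. c i * \<phi> i z)) \<le> \<epsilon>)"
proof -
  obtain h where "lincomb_of Moeb h" "\<forall>z\<in>cball 0 1. cmod (f z - h z) \<le> \<epsilon>"
    using approximable_disc_algebra[OF assms(1)] assms(2) unfolding approximable_on_def by blast
  then show ?thesis
    unfolding lincomb_of_def by blast
qed

end
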